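(* For every $n\in\mathbb{N}$ and $t\in\mathbb{C}$, \[ t^n=\sum_{k=0}^nS_D[n,k]\,(t)^{D}_{k,q}+n(t-1)^{n-1}-[n]_q\,q^{n-1}(t)^{D}_{n-1,q}. \]
   Context: $[k]_q=1+\dots+q^{k-1}$, $[0]_q=0$. For fixed $n$, the $q$-falling factorial of type D is $(t)^D_{0,q}=1$, $(t)^D_{k,q}=(t-[1]_q)(t-[3]_q)\cdots(t-[2k-1]_q)$ for $1\le k<n$, and $(t)^D_{n,q}=(t-[1]_q)(t-[3]_q)\cdots(t-[2n-3]_q)(t-[n-1]_q)$. For $S\subset\mathbb{Z}\setminus\{0\}$, $\overline{S}=\{-i:i\in S\}$, a standard signed partition (SSP) of $S$ with $k$ blocks is a sequence $(S_1,\dots,S_k)$ of disjoint nonempty subsets of $S\cup\overline{S}$ with $\{S_1,\dots,S_k,\overline{S_1},\dots,\overline{S_k}\}$ a partition of $S\cup\overline{S}$ and $\min|S_1|\le\dots\le\min|S_k|$ ($|S_i|=\{|j|:j\in S_i\}$). A PSSP of $S$ is an SSP of a (possibly empty) subset of $S$. $B(S,k)$, $B_{\subseteq}(S,k)$ are the sets of SSPs, PSSPs of $S$ with $k$ blocks, and $D_{\subseteq}([n],k)=B_{\subseteq}([n],k)\setminus\bigcup_{i=1}^nB([n]\setminus\{i\},k)$. For $\pi=(S_1,\dots,S_k)$, $\mathrm{pos}(\pi)=\#\{x\in\bigcup_iS_i:x>0\}$, $m(\pi)=2\sum_{i=1}^ki\cdot\#S_i-\mathrm{pos}(\pi)$,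 and $S_D[n,k]=\frac{1}{q^{k^2}[2]_q^k}\sum_{\pi\in D_{\subseteq}([n],k)}q^{m(\pi)}$. For $n=0$ the terms $n(t-1)^{n-1}$ and $[n]_qq^{n-1}(t)^D_{n-1,q}$ are $0$. *)

theory Defs
  imports Complex_Main
begin

definition qint :: "complex \<Rightarrow> nat \<Rightarrow> complex" where
  "qint q k = (\<Sum>i<k. q ^ i)"

definition qfallD :: "nat \<Rightarrow> complex \<Rightarrow> complex \<Rightarrow> nat \<Rightarrow> complex" where
  "qfallD n q t k =
     (if k = 0 then 1
      else if k < n then (\<Prod>i=1..k. t - qint q (2*i - 1))
      else if k = n then (\<Prod>i=1..n-1. t - qint q (2*i - 1)) * (t - qint q (n - 1))
      else 0)"

definition negset :: "int set \<Rightarrow> int set" where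
  "negset A = uminus ` A"

definition absset :: "int set \<Rightarrow> int set" where
  "absset A = abs ` A"

definition SSP :: "int set \<Rightarrow> nat \<Rightarrow> int set list \<Rightarrow> bool" where
  "SSP S k \<pi> \<longleftrightarrow>
     length \<pi> = k \<and>
     (\<forall>i<k. \<pi> ! i \<noteq> {}) \<and>
     (\<forall>i<k. \<forall>j<k. i \<noteq> j \<longrightarrow> \<pi> ! i \<inter> \<pi> ! j = {}) \<and>
     (\<forall>i<k. \<forall>j<k. i \<noteq> j \<longrightarrow> negset (\<pi> ! i) \<inter> negset (\<pi> ! j) = {}) \<and>
     (\<forall>i<k. \<forall>j<k. \<pi> ! i \<inter> negset (\<pi> ! j) = {}) \<and>
     (\<Union>i<k. \<pi> ! i \<union> negset (\<pi> ! i)) = S \<union> negset S \<and>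
     (\<forall>i j. i \<le> j \<and> j < k \<longrightarrow> Min (absset (\<pi> ! i)) \<le> Min (absset (\<pi> ! j)))"

definition Bset :: "int set \<Rightarrow> nat \<Rightarrow> int set list set" where
  "Bset S k = {\<pi>. SSP S k \<pi>}"

definition Bsub :: "nat \<Rightarrow> nat \<Rightarrow> int set list set" where
  "Bsub n k = {\<pi>. \<exists>T. T \<subseteq> {1..int n} \<and> SSP T k \<pi>}"

definition Dsub :: "nat \<Rightarrow> nat \<Rightarrow> int set list set" where
  "Dsub n k = Bsub n k - (\<Union>i\<in>{1..int n}. Bset ({1..int n} - {i}) k)"

definition pos :: "int set list \<Rightarrow> nat" where
  "pos \<pi> = card {x \<in> (\<Union>B\<in>set \<pi>. B). x > 0}"

definition mstat :: "int set list \<Rightarrow> int" where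
  "mstat \<pi> = 2 * (\<Sum>i<length \<pi>. int (i + 1) * int (card (\<pi> ! i))) - int (pos \<pi>)"

definition SD :: "complex \<Rightarrow> nat \<Rightarrow> nat \<Rightarrow> complex" where
  "SD q n k = (1 / (q ^ (k^2) * (qint q 2) ^ k)) * (\<Sum>\<pi>\<in>Dsub n k. q powi mstat \<pi>)"

end

theory Submission
  imports Defs
begin

text \<open>For a finite set T of positive integers, the q-weighted number of standard signed
partitions of T with k blocks depends only on the size of T.  Indeed, the largest element a of T
either forms a singleton last block {a} or {-a} of a partition with one block fewer, or is added
with one of its signs to one of the blocks of a partition of T - {a}; hence the weighted numbers
are q^(k^2) (1 + q)^k times q-Stirling numbers S_B(r, k) of type B.  These satisfy
(t - 1)^r = \<Sum>k S_B(r, k) (t)^B_k with (t)^B_k = (t - [1]_q) ... (t - [2k - 1]_q), and summing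
over all subsets of [n] turns (t - 1)^|T| into t^n.  S_D[n, k] is this sum over subsets with the
n subsets [n] - {i} removed, and the type D factorial differs from the type B one only in its
last factor; the two correction terms of the formula account for exactly these differences.\<close>

section \<open>q-integers\<close>

lemma qint_Suc_eq: "qint q (Suc m) = 1 + q * qint q m"
  unfolding qint_def by (subst sum.lessThan_Suc_shift) (simp add: sum_distrib_left)

lemma qint_add: "qint q (m + n) = qint q m + q ^ m * qint q n"
  by (induction n) (simp_all add: qint_def algebra_simps power_add)

lemma q_mult_qint_double: "q * qint q (2 * k) = (\<Sum>i<k. q ^ (2 * i + 1) * (1 + q))"
proof (induction k)
  case (Suc k)
  have "qint q (2 * Suc k) = qint q (2 * k) + q ^ (2 * k) + q ^ (2 * k + 1)"
    by (simp add: qint_def)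
  then show ?case using Suc by (simp add: algebra_simps power_add)
qed (simp add: qint_def)

section \<open>Signed partitions described by absolute values\<close>

text \<open>For a
ground set of positive integers, injectivity of the absolute value on these pairs is exactly the
disjointness of S_1, ..., S_k, -S_1, ..., -S_k required of an SSP (SSP_iff_SSP_abs).\<close>

definition block_entries :: "int set list \<Rightarrow> (nat \<times> int) set" where
  "block_entries \<pi> = (SIGMA i:{..<length \<pi>}. \<pi> ! i)"

definition SSP_abs :: "int set \<Rightarrow> nat \<Rightarrow> int set list \<Rightarrow> bool" where
  "SSP_abs T k \<pi> \<longleftrightarrow> length \<pi> = k \<and> {} \<notin> set \<pi> \<and>
     bij_betw (\<lambda>(i, x). \<bar>x\<bar>) (block_entries \<pi>) T \<and>
     sorted (map (\<lambda>B. Min (abs ` B)) \<pi>)"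

lemma mem_block_entries [simp]: "(i, x) \<in> block_entries \<pi> \<longleftrightarrow> i < length \<pi> \<and> x \<in> \<pi> ! i"
  by (simp add: block_entries_def)

lemma block_entries_append:
  "block_entries (\<pi> @ [B]) = block_entries \<pi> \<union> {length \<pi>} \<times> B"
  by (auto simp: block_entries_def nth_append less_Suc_eq)

lemma block_entries_insert_block:
  "i < length \<pi> \<Longrightarrow> block_entries (\<pi>[i := insert s (\<pi> ! i)]) = insert (i, s) (block_entries \<pi>)"
  by (auto simp: block_entries_def nth_list_update split: if_splits)

lemma Union_set_eq_snd_block_entries: "\<Union>(set \<pi>) = snd ` block_entries \<pi>"
proof (intro equalityI subsetI)
  fix x assume "x \<in> \<Union>(set \<pi>)"
  then obtain i where "i < length \<pi>" "x \<in> \<pi> ! i" by (auto simp: in_set_conv_nth)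
  then show "x \<in> snd ` block_entries \<pi>" by (auto intro: rev_image_eqI[of "(i, x)"])
qed (auto simp: block_entries_def)

lemma SSP_abs_abs_mem:
  assumes "SSP_abs T k \<pi>" "i < k" "x \<in> \<pi> ! i"
  shows "\<bar>x\<bar> \<in> T"
proof -
  have "(i, x) \<in> block_entries \<pi>" using assms unfolding SSP_abs_def by simp
  then show ?thesis using assms(1) unfolding SSP_abs_def by (fastforce dest: bij_betwE)
qed

lemma SSP_abs_abs_inj:
  assumes "SSP_abs T k \<pi>" "i < k" "j < k" "x \<in> \<pi> ! i" "y \<in> \<pi> ! j" "\<bar>x\<bar> = \<bar>y\<bar>"
  shows "i = j \<and> x = y"
proof -
  have inj: "inj_on (\<lambda>(i, x). \<bar>x\<bar>) (block_entries \<pi>)" and len: "length \<pi> = k"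
    using assms(1) unfolding SSP_abs_def bij_betw_def by simp_all
  from inj_onD[OF inj, of "(i, x)" "(j, y)"] show ?thesis using assms(2-) len by simp
qed

lemma SSP_abs_abs_surj:
  assumes "SSP_abs T k \<pi>" "y \<in> T"
  obtains i x where "i < k" "x \<in> \<pi> ! i" "\<bar>x\<bar> = y"
proof -
  have "y \<in> (\<lambda>(i, x). \<bar>x\<bar>) ` block_entries \<pi>" "length \<pi> = k"
    using assms unfolding SSP_abs_def bij_betw_def by simp_all
  then show ?thesis using that by auto
qed

lemma SSP_abs_nonempty: "SSP_abs T k \<pi> \<Longrightarrow> i < k \<Longrightarrow> \<pi> ! i \<noteq> {}"
  unfolding SSP_abs_def by (metis nth_mem)

lemma SSP_abs_unique: "SSP_abs T k \<pi> \<Longrightarrow> SSP_abs T' k \<pi> \<Longrightarrow> T = T'"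
  unfolding SSP_abs_def bij_betw_def by simp

lemma SSP_abs_finite_block: "SSP_abs T k \<pi> \<Longrightarrow> finite T \<Longrightarrow> B \<in> set \<pi> \<Longrightarrow> finite B"
proof -
  assume "SSP_abs T k \<pi>" "finite T" "B \<in> set \<pi>"
  then have "finite (block_entries \<pi>)"
    unfolding SSP_abs_def by (auto dest: bij_betw_finite)
  moreover have "B \<subseteq> snd ` block_entries \<pi>"
    using \<open>B \<in> set \<pi>\<close> Union_set_eq_snd_block_entries by blast
  ultimately show "finite B" by (meson finite_imageI finite_subset)
qed

lemma SSP_abs_Min_abs_mem:
  assumes "SSP_abs T k \<pi>" "finite T" "B \<in> set \<pi>"
  shows "Min (abs ` B) \<in> abs ` B" "Min (abs ` B) \<in> T"
proof -
  have "B \<noteq> {}" "finite B" using assms SSP_abs_finite_block unfolding SSP_abs_def by auto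
  then show "Min (abs ` B) \<in> abs ` B" by simp
  then show "Min (abs ` B) \<in> T"
    using assms SSP_abs_abs_mem unfolding SSP_abs_def by (fastforce simp: in_set_conv_nth)
qed

lemma SSP_abs_append_singleton_iff:
  assumes fin: "finite T" and less: "\<forall>y\<in>T. y < \<bar>s\<bar>"
  shows "SSP_abs (insert \<bar>s\<bar> T) (Suc j) (\<pi> @ [{s}]) \<longleftrightarrow> SSP_abs T j \<pi>"
proof (cases "length \<pi> = j")
  case len: True
  have "block_entries (\<pi> @ [{s}]) = block_entries \<pi> \<union> {(j, s)}"
    using len by (simp add: block_entries_append)
  moreover have "(j, s) \<notin> block_entries \<pi>" "\<bar>s\<bar> \<notin> T" using len less by auto
  ultimately have bij: "bij_betw (\<lambda>(i, x). \<bar>x\<bar>) (block_entries (\<pi> @ [{s}])) (insert \<bar>s\<bar> T)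
      \<longleftrightarrow> bij_betw (\<lambda>(i, x). \<bar>x\<bar>) (block_entries \<pi>) T"
    using notIn_Un_bij_betw3[of "(j, s)" "block_entries \<pi>" "\<lambda>(i, x). \<bar>x\<bar>" T] by simp
  show ?thesis
  proof
    assume "SSP_abs (insert \<bar>s\<bar> T) (Suc j) (\<pi> @ [{s}])"
    then show "SSP_abs T j \<pi>" using bij len unfolding SSP_abs_def by (simp add: sorted_append)
  next
    assume ssp: "SSP_abs T j \<pi>"
    then have "\<forall>B\<in>set \<pi>. Min (abs ` B) \<le> \<bar>s\<bar>"
      using SSP_abs_Min_abs_mem(2)[OF ssp fin] less by fastforce
    then show "SSP_abs (insert \<bar>s\<bar> T) (Suc j) (\<pi> @ [{s}])"
      using ssp bij len unfolding SSP_abs_def by (simp add: sorted_append)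
  qed
qed (auto simp: SSP_abs_def)

lemma SSP_abs_insert_block_iff:
  assumes fin: "finite T" and less: "\<forall>y\<in>T. y < \<bar>s\<bar>"
    and i: "i < length \<pi>" and ne: "\<pi> ! i \<noteq> {}" and s: "s \<notin> \<pi> ! i"
  shows "SSP_abs (insert \<bar>s\<bar> T) k (\<pi>[i := insert s (\<pi> ! i)]) \<longleftrightarrow> SSP_abs T k \<pi>"
proof -
  let ?\<pi>' = "\<pi>[i := insert s (\<pi> ! i)]" and ?f = "\<lambda>(i, x). \<bar>x\<bar>" and ?m = "\<lambda>B. Min (abs ` B)"
  have "block_entries ?\<pi>' = block_entries \<pi> \<union> {(i, s)}"
    using i by (simp add: block_entries_insert_block)
  moreover have "(i, s) \<notin> block_entries \<pi>" "\<bar>s\<bar> \<notin> T" using s less by auto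
  ultimately have bij: "bij_betw ?f (block_entries ?\<pi>') (insert \<bar>s\<bar> T)
      \<longleftrightarrow> bij_betw ?f (block_entries \<pi>) T"
    using notIn_Un_bij_betw3[of "(i, s)" "block_entries \<pi>" ?f T] by simp
  have map_eq: "map ?m ?\<pi>' = map ?m \<pi>" if "bij_betw ?f (block_entries \<pi>) T"
  proof -
    have "abs ` (\<pi> ! i) \<subseteq> T" using i bij_betw_apply[OF that] by fastforce
    then have "finite (abs ` (\<pi> ! i))" "\<forall>y\<in>abs ` (\<pi> ! i). y < \<bar>s\<bar>"
      using fin less finite_subset by blast+
    moreover have "?m (\<pi> ! i) \<in> abs ` (\<pi> ! i)" using ne calculation(1) by simp
    ultimately have "?m (\<pi> ! i) < \<bar>s\<bar>" by blast
    moreover have "?m (insert s (\<pi> ! i)) = min \<bar>s\<bar> (?m (\<pi> ! i))"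
      using \<open>finite (abs ` (\<pi> ! i))\<close> ne by simp
    ultimately have "?m (insert s (\<pi> ! i)) = ?m (\<pi> ! i)" by simp
    then show ?thesis using i by (simp add: map_update list_update_same_conv)
  qed
  have "{} \<in> set ?\<pi>' \<longleftrightarrow> {} \<in> set \<pi>"
    using i ne by (auto simp: in_set_conv_nth nth_list_update split: if_splits)
  then show ?thesis unfolding SSP_abs_def using bij map_eq by auto
qed

lemma SSP_abs_singleton_block_last:
  assumes ssp: "SSP_abs T k \<pi>" and fin: "finite T" and i: "i < k" and si: "\<pi> ! i = {s}"
    and le: "\<forall>y\<in>T. y \<le> \<bar>s\<bar>"
  shows "i = k - 1"
proof -
  let ?B = "\<pi> ! (k - 1)"
  have len: "length \<pi> = k" and last: "k - 1 < k" using ssp i unfolding SSP_abs_def by auto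
  have "Min (abs ` (\<pi> ! i)) \<le> Min (abs ` ?B)"
    using ssp i len unfolding SSP_abs_def by (simp add: sorted_iff_nth_mono)
  moreover obtain x where x: "x \<in> ?B" "\<bar>x\<bar> = Min (abs ` ?B)"
    using SSP_abs_Min_abs_mem(1)[OF ssp fin, of ?B] last len by (metis imageE nth_mem)
  moreover have "\<bar>x\<bar> \<le> \<bar>s\<bar>" using le SSP_abs_abs_mem[OF ssp last x(1)] by blast
  ultimately have "\<bar>x\<bar> = \<bar>s\<bar>" using si by simp
  then show ?thesis using SSP_abs_abs_inj[OF ssp last i x(1)] si by simp
qed

lemma bij_betw_abs_block_entries_if_disjoint_cover:
  assumes pos: "T \<subseteq> {0<..}" and len: "length \<pi> = k"
    and disj: "\<forall>i<k. \<forall>j<k. i \<noteq> j \<longrightarrow> \<pi> ! i \<inter> \<pi> ! j = {}"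
    and cross: "\<forall>i<k. \<forall>j<k. \<pi> ! i \<inter> negset (\<pi> ! j) = {}"
    and cover: "(\<Union>i<k. \<pi> ! i \<union> negset (\<pi> ! i)) = T \<union> negset T"
  shows "bij_betw (\<lambda>(i, x). \<bar>x\<bar>) (block_entries \<pi>) T"
proof -
  have "inj_on (\<lambda>(i, x). \<bar>x\<bar>) (block_entries \<pi>)"
  proof (rule inj_onI, clarsimp)
    fix i j x y assume "i < length \<pi>" "x \<in> \<pi> ! i" "j < length \<pi>" "y \<in> \<pi> ! j" "\<bar>x\<bar> = \<bar>y\<bar>"
    moreover have "y \<noteq> - x" using calculation cross len unfolding negset_def by blast
    ultimately show "i = j \<and> x = y" using disj len by (auto simp: abs_eq_iff)
  qed
  moreover have "(\<lambda>(i, x). \<bar>x\<bar>) ` block_entries \<pi> = T"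
  proof (intro equalityI subsetI)
    fix y assume "y \<in> (\<lambda>(i, x). \<bar>x\<bar>) ` block_entries \<pi>"
    then obtain i x where "i < k" "x \<in> \<pi> ! i" "y = \<bar>x\<bar>" using len by auto
    then have "x \<in> T \<union> negset T" using cover by blast
    then show "y \<in> T" using pos \<open>y = \<bar>x\<bar>\<close> unfolding negset_def by auto
  next
    fix y assume "y \<in> T"
    then obtain i where "i < k" "y \<in> \<pi> ! i \<union> negset (\<pi> ! i)" using cover by blast
    then obtain x where "x \<in> \<pi> ! i" "\<bar>x\<bar> = y" using pos \<open>y \<in> T\<close> unfolding negset_def by force
    then show "y \<in> (\<lambda>(i, x). \<bar>x\<bar>) ` block_entries \<pi>" using \<open>i < k\<close> len by force
  qed
  ultimately show ?thesis by (simp add: bij_betw_def)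
qed

lemma disjoint_cover_if_bij_betw_abs_block_entries:
  assumes pos: "T \<subseteq> {0<..}" and len: "length \<pi> = k"
    and bij: "bij_betw (\<lambda>(i, x). \<bar>x\<bar>) (block_entries \<pi>) T"
  shows "\<forall>i<k. \<forall>j<k. i \<noteq> j \<longrightarrow> \<pi> ! i \<inter> \<pi> ! j = {}"
    and "\<forall>i<k. \<forall>j<k. i \<noteq> j \<longrightarrow> negset (\<pi> ! i) \<inter> negset (\<pi> ! j) = {}"
    and "\<forall>i<k. \<forall>j<k. \<pi> ! i \<inter> negset (\<pi> ! j) = {}"
    and "(\<Union>i<k. \<pi> ! i \<union> negset (\<pi> ! i)) = T \<union> negset T"
proof -
  have inj: "i = j \<and> x = y"
    if "i < k" "j < k" "x \<in> \<pi> ! i" "y \<in> \<pi> ! j" "\<bar>x\<bar> = \<bar>y\<bar>" for i j x y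
    using inj_onD[OF bij_betw_imp_inj_on[OF bij], of "(i, x)" "(j, y)"] that len by simp
  have img: "(\<lambda>(i, x). \<bar>x\<bar>) ` block_entries \<pi> = T" using bij by (simp add: bij_betw_def)
  then have abs_mem: "\<bar>x\<bar> \<in> T" if "i < k" "x \<in> \<pi> ! i" for i x
    using that len by force
  show disj: "\<forall>i<k. \<forall>j<k. i \<noteq> j \<longrightarrow> \<pi> ! i \<inter> \<pi> ! j = {}"
    using inj by blast
  then show "\<forall>i<k. \<forall>j<k. i \<noteq> j \<longrightarrow> negset (\<pi> ! i) \<inter> negset (\<pi> ! j) = {}"
    unfolding negset_def by (simp add: image_Int[symmetric])
  have "\<pi> ! i \<inter> negset (\<pi> ! j) = {}" if "i < k" "j < k" for i j
  proof -
    have "x \<notin> \<pi> ! i" if "- x \<in> \<pi> ! j" for x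
    proof
      assume "x \<in> \<pi> ! i"
      then have "x = - x" using inj[OF \<open>i < k\<close> \<open>j < k\<close> _ that] by simp
      then show False using abs_mem[OF \<open>i < k\<close> \<open>x \<in> \<pi> ! i\<close>] pos by auto
    qed
    then show ?thesis unfolding negset_def by auto
  qed
  then show "\<forall>i<k. \<forall>j<k. \<pi> ! i \<inter> negset (\<pi> ! j) = {}" by blast
  have "T \<union> negset T = {x. \<bar>x\<bar> \<in> T}"
    using pos unfolding negset_def by (force simp: abs_if)
  also have "\<dots> = (\<Union>i<k. \<pi> ! i \<union> negset (\<pi> ! i))"
    using img len unfolding negset_def by (force simp: abs_eq_iff)
  finally show "(\<Union>i<k. \<pi> ! i \<union> negset (\<pi> ! i)) = T \<union> negset T" ..
qed

lemma SSP_iff_SSP_abs: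
  assumes pos: "T \<subseteq> {0<..}"
  shows "SSP T k \<pi> \<longleftrightarrow> SSP_abs T k \<pi>"
proof (cases "length \<pi> = k")
  case len: True
  have nonempty: "(\<forall>i<k. \<pi> ! i \<noteq> {}) \<longleftrightarrow> {} \<notin> set \<pi>"
    using len by (auto simp: in_set_conv_nth)
  have sorted: "(\<forall>i j. i \<le> j \<and> j < k \<longrightarrow> Min (absset (\<pi> ! i)) \<le> Min (absset (\<pi> ! j)))
      \<longleftrightarrow> sorted (map (\<lambda>B. Min (abs ` B)) \<pi>)"
    using len by (auto simp: sorted_iff_nth_mono absset_def)
  show ?thesis
  proof
    assume ssp: "SSP T k \<pi>"
    then have "bij_betw (\<lambda>(i, x). \<bar>x\<bar>) (block_entries \<pi>) T"
      unfolding SSP_def by (intro bij_betw_abs_block_entries_if_disjoint_cover[OF pos len]) simp_all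
    then show "SSP_abs T k \<pi>" using ssp nonempty sorted len unfolding SSP_def SSP_abs_def by simp
  next
    assume ssp: "SSP_abs T k \<pi>"
    then have "bij_betw (\<lambda>(i, x). \<bar>x\<bar>) (block_entries \<pi>) T" unfolding SSP_abs_def by simp
    from disjoint_cover_if_bij_betw_abs_block_entries[OF pos len this]
    show "SSP T k \<pi>" using ssp nonempty sorted len unfolding SSP_def SSP_abs_def by simp
  qed
qed (simp add: SSP_def SSP_abs_def)

lemma SSP_abs_empty_iff: "SSP_abs {} k \<pi> \<longleftrightarrow> k = 0 \<and> \<pi> = []"
proof
  assume ssp: "SSP_abs {} k \<pi>"
  then have "block_entries \<pi> = {}" unfolding SSP_abs_def by (simp add: bij_betw_def)
  then have "\<forall>B\<in>set \<pi>. B = {}" using Union_set_eq_snd_block_entries by blast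
  then show "k = 0 \<and> \<pi> = []" using ssp unfolding SSP_abs_def by (cases \<pi>) auto
qed (simp add: SSP_abs_def block_entries_def bij_betw_def)

lemma SSP_abs_zero_iff: "SSP_abs T 0 \<pi> \<longleftrightarrow> T = {} \<and> \<pi> = []"
  by (auto simp: SSP_abs_def block_entries_def bij_betw_def)

lemma finite_SSP_abs: "finite T \<Longrightarrow> finite {\<pi>. SSP_abs T k \<pi>}"
proof (rule finite_subset)
  have "B \<subseteq> T \<union> uminus ` T" if "SSP_abs T k \<pi>" "B \<in> set \<pi>" for \<pi> B
  proof
    fix x assume "x \<in> B"
    then have "\<bar>x\<bar> \<in> T" using that SSP_abs_abs_mem unfolding SSP_abs_def by (metis in_set_conv_nth)
    then show "x \<in> T \<union> uminus ` T" by (cases "0 \<le> x") (auto intro: rev_image_eqI)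
  qed
  then show "{\<pi>. SSP_abs T k \<pi>} \<subseteq> {\<pi>. set \<pi> \<subseteq> Pow (T \<union> uminus ` T) \<and> length \<pi> = k}"
    unfolding SSP_abs_def by blast
qed (simp add: finite_lists_length_eq)

lemma pos_insert:
  assumes "\<Union>(set \<pi>') = insert s (\<Union>(set \<pi>))" "finite (\<Union>(set \<pi>))" "s \<notin> \<Union>(set \<pi>)"
  shows "pos \<pi>' = pos \<pi> + (if 0 < s then 1 else 0)"
proof -
  define U where "U = \<Union>(set \<pi>)"
  have "{x \<in> insert s U. 0 < x} = (if 0 < s then insert s {x \<in> U. 0 < x} else {x \<in> U. 0 < x})"
    by auto
  moreover have "finite {x \<in> U. 0 < x}" using assms(2) unfolding U_def by (rule rev_finite_subset) auto
  moreover have "s \<notin> U" using assms(3) unfolding U_def .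
  ultimately have "card {x \<in> insert s U. 0 < x} = card {x \<in> U. 0 < x} + (if 0 < s then 1 else 0)"
    by simp
  then show ?thesis using assms(1) unfolding pos_def U_def by simp
qed

lemma mstat_append_singleton:
  assumes "\<forall>B\<in>set \<pi>. finite B" "s \<notin> \<Union>(set \<pi>)"
  shows "mstat (\<pi> @ [{s}]) = mstat \<pi> + int (2 * length \<pi> + (if 0 < s then 1 else 2))"
proof -
  have "pos (\<pi> @ [{s}]) = pos \<pi> + (if 0 < s then 1 else 0)"
    using assms by (intro pos_insert) auto
  moreover have "(\<Sum>i<length (\<pi> @ [{s}]). int (i + 1) * int (card ((\<pi> @ [{s}]) ! i)))
      = (\<Sum>i<length \<pi>. int (i + 1) * int (card (\<pi> ! i))) + int (length \<pi> + 1)"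
    by (simp add: nth_append)
  ultimately show ?thesis unfolding mstat_def by simp
qed

lemma mstat_insert_block:
  assumes i: "i < length \<pi>" and fin: "\<forall>B\<in>set \<pi>. finite B" and s: "s \<notin> \<Union>(set \<pi>)"
  shows "mstat (\<pi>[i := insert s (\<pi> ! i)]) = mstat \<pi> + int (2 * i + (if 0 < s then 1 else 2))"
proof -
  have "\<Union>(set (\<pi>[i := insert s (\<pi> ! i)])) = insert s (\<Union>(set \<pi>))"
    using i by (simp add: Union_set_eq_snd_block_entries block_entries_insert_block)
  then have pos: "pos (\<pi>[i := insert s (\<pi> ! i)]) = pos \<pi> + (if 0 < s then 1 else 0)"
    using fin s by (intro pos_insert) auto
  have "card (insert s (\<pi> ! i)) = card (\<pi> ! i) + 1"
    using i fin s by simp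
  then have "(\<Sum>j<length \<pi>. int (j + 1) * int (card (\<pi>[i := insert s (\<pi> ! i)] ! j)))
      = (\<Sum>j<length \<pi>. int (j + 1) * int (card (\<pi> ! j)) + (if j = i then int (i + 1) else 0))"
    by (intro sum.cong) (auto simp: nth_list_update algebra_simps)
  also have "\<dots> = (\<Sum>j<length \<pi>. int (j + 1) * int (card (\<pi> ! j))) + int (i + 1)"
    using i by (simp add: sum.distrib)
  finally show ?thesis using pos unfolding mstat_def by simp
qed

section \<open>Weighted counts and q-Stirling numbers of type B\<close>

definition ssp_weight :: "complex \<Rightarrow> int set \<Rightarrow> nat \<Rightarrow> complex" where
  "ssp_weight q T k = (\<Sum>\<pi> | SSP_abs T k \<pi>. q powi mstat \<pi>)"

lemma powi_add_of_nat:
  fixes x :: "'b::field"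
  shows "x \<noteq> 0 \<Longrightarrow> x powi (m + int n) = x powi m * x ^ n"
  by (simp add: power_int_add)

lemma sum_signs_power:
  fixes a :: int and x :: "'b::comm_semiring_1"
  assumes "0 < a"
  shows "(\<Sum>s\<in>{a, -a}. x ^ (2 * i + (if 0 < s then 1 else 2))) = x ^ (2 * i + 1) * (1 + x)"
  using assms by (simp add: algebra_simps)

context
  fixes T :: "int set" and a :: int
  assumes fin: "finite T" and less: "\<forall>y\<in>T. y < a" and a_pos: "0 < a"
begin

lemma SSP_abs_insert_max_cases:
  assumes ssp: "SSP_abs (insert a T) (Suc j) \<pi>"
  obtains (append) \<pi>' s where "SSP_abs T j \<pi>'" "s \<in> {a, -a}" "\<pi> = \<pi>' @ [{s}]"
  | (insert_block) \<pi>' i s where "SSP_abs T (Suc j) \<pi>'" "i < Suc j" "s \<in> {a, -a}"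
      "\<pi> = \<pi>'[i := insert s (\<pi>' ! i)]"
proof -
  have len: "length \<pi> = Suc j" using ssp by (simp add: SSP_abs_def)
  obtain i s where i: "i < Suc j" and s: "s \<in> \<pi> ! i" and abs_s: "\<bar>s\<bar> = a"
    using SSP_abs_abs_surj[OF ssp, of a] by auto
  have sign: "s \<in> {a, -a}" and less_s: "\<forall>y\<in>T. y < \<bar>s\<bar>" using abs_s less by auto
  show thesis
  proof (cases "\<pi> ! i = {s}")
    case True
    have "\<forall>y\<in>insert a T. y \<le> \<bar>s\<bar>" using less abs_s by auto
    then have "i = j" using SSP_abs_singleton_block_last[OF ssp _ i True] fin by simp
    moreover have "\<pi> \<noteq> []" using len by auto
    ultimately have "last \<pi> = {s}" using True len by (simp add: last_conv_nth)
    then obtain \<pi>' where \<pi>_eq: "\<pi> = \<pi>' @ [{s}]"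
      using len by (metis append_butlast_last_id list.size(3) nat.distinct(1))
    then have "SSP_abs T j \<pi>'"
      using ssp SSP_abs_append_singleton_iff[OF fin less_s] abs_s by simp
    then show thesis using append \<pi>_eq sign by blast
  next
    case False
    define \<pi>' where "\<pi>' = \<pi>[i := \<pi> ! i - {s}]"
    have \<pi>_eq: "\<pi> = \<pi>'[i := insert s (\<pi>' ! i)]" using s i len by (simp add: \<pi>'_def insert_absorb)
    have "i < length \<pi>'" "\<pi>' ! i \<noteq> {}" "s \<notin> \<pi>' ! i" using False s i len by (auto simp: \<pi>'_def)
    moreover have "SSP_abs (insert \<bar>s\<bar> T) (Suc j) (\<pi>'[i := insert s (\<pi>' ! i)])"
      using ssp abs_s \<pi>_eq by simp
    ultimately have "SSP_abs T (Suc j) \<pi>'" using SSP_abs_insert_block_iff[OF fin less_s] by blast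
    then show thesis using insert_block \<pi>_eq sign i by blast
  qed
qed

lemma SSP_abs_insert_max_eq:
  "{\<pi>. SSP_abs (insert a T) (Suc j) \<pi>} =
     (\<lambda>(\<pi>, s). \<pi> @ [{s}]) ` ({\<pi>. SSP_abs T j \<pi>} \<times> {a, -a}) \<union>
     (\<lambda>(\<pi>, i, s). \<pi>[i := insert s (\<pi> ! i)]) ` ({\<pi>. SSP_abs T (Suc j) \<pi>} \<times> {..<Suc j} \<times> {a, -a})"
  (is "?X = ?A \<union> ?B")
proof (intro equalityI subsetI)
  fix \<pi> assume "\<pi> \<in> ?X"
  then have "SSP_abs (insert a T) (Suc j) \<pi>" by simp
  then show "\<pi> \<in> ?A \<union> ?B"
  proof (cases rule: SSP_abs_insert_max_cases)
    case (append \<pi>' s)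
    then show ?thesis by (auto intro!: rev_image_eqI[of "(\<pi>', s)"])
  next
    case (insert_block \<pi>' i s)
    then show ?thesis by (auto intro!: rev_image_eqI[of "(\<pi>', i, s)"])
  qed
next
  fix \<pi> assume "\<pi> \<in> ?A \<union> ?B"
  then show "\<pi> \<in> ?X"
  proof
    assume "\<pi> \<in> ?A"
    then obtain \<pi>' s where "SSP_abs T j \<pi>'" "\<bar>s\<bar> = a" "\<pi> = \<pi>' @ [{s}]"
      using a_pos by force
    then show ?thesis using SSP_abs_append_singleton_iff[OF fin, of s j \<pi>'] less by simp
  next
    assume "\<pi> \<in> ?B"
    then obtain \<pi>' i s where ssp: "SSP_abs T (Suc j) \<pi>'" and i: "i < Suc j"
      and s: "\<bar>s\<bar> = a" and \<pi>_eq: "\<pi> = \<pi>'[i := insert s (\<pi>' ! i)]"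
      using a_pos by force
    have "s \<notin> \<pi>' ! i" using SSP_abs_abs_mem[OF ssp i] less s by fastforce
    moreover have "\<pi>' ! i \<noteq> {}" "i < length \<pi>'" using ssp i by (auto simp: SSP_abs_def SSP_abs_nonempty)
    ultimately show ?thesis using SSP_abs_insert_block_iff[OF fin, of s i \<pi>'] less s ssp \<pi>_eq by simp
  qed
qed

lemma inj_on_insert_block:
  "inj_on (\<lambda>(\<pi>, i, s). \<pi>[i := insert s (\<pi> ! i)]) ({\<pi>. SSP_abs T k \<pi>} \<times> {..<k} \<times> {a, -a})"
  (is "inj_on ?f ?D")
proof (rule inj_onI)
  fix x y assume x: "x \<in> ?D" and y: "y \<in> ?D" and eq_xy: "?f x = ?f y"
  obtain \<pi> i s where x_eq: "x = (\<pi>, i, s)" by (cases x)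
  obtain \<pi>' i' s' where y_eq: "y = (\<pi>', i', s')" by (cases y)
  have ssp: "SSP_abs T k \<pi>" "SSP_abs T k \<pi>'" and i: "i < k" "i' < k"
    and s: "s \<in> {a, -a}" "s' \<in> {a, -a}" using x y x_eq y_eq by auto
  have eq: "\<pi>[i := insert s (\<pi> ! i)] = \<pi>'[i' := insert s' (\<pi>' ! i')]" using eq_xy x_eq y_eq by simp
  have len: "length \<pi> = k" "length \<pi>' = k" using ssp by (simp_all add: SSP_abs_def)
  have small: "x \<notin> \<pi>' ! l" "x \<notin> \<pi> ! l" if "\<bar>x\<bar> = a" "l < k" for x l
    using SSP_abs_abs_mem[OF ssp(1) that(2)] SSP_abs_abs_mem[OF ssp(2) that(2)] less that(1) by auto
  have "s \<in> \<pi>'[i' := insert s' (\<pi>' ! i')] ! i" using eq[symmetric] i len by simp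
  then have "i = i'" using small[of s i] s a_pos i len by (cases "i = i'") auto
  moreover have ins: "insert s (\<pi> ! i) = insert s' (\<pi>' ! i)"
    using arg_cong[OF eq, of "\<lambda>\<pi>. \<pi> ! i"] i len \<open>i = i'\<close> by simp
  moreover have "s \<notin> \<pi>' ! i" "s \<notin> \<pi> ! i" using small s a_pos i by auto
  ultimately have "s = s'" by blast
  then have "\<pi> ! i = \<pi>' ! i"
    using ins \<open>s \<notin> \<pi>' ! i\<close> \<open>s \<notin> \<pi> ! i\<close> by (metis insert_ident)
  have "\<pi> = (\<pi>[i := insert s (\<pi> ! i)])[i := \<pi> ! i]" by simp
  also have "\<dots> = (\<pi>'[i := insert s (\<pi>' ! i)])[i := \<pi>' ! i]"
    using eq \<open>i = i'\<close> \<open>s = s'\<close> \<open>\<pi> ! i = \<pi>' ! i\<close> by simp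
  finally show "x = y" using x_eq y_eq \<open>i = i'\<close> \<open>s = s'\<close> by simp
qed

lemma append_singleton_ne_insert_block:
  assumes "SSP_abs T j \<pi>" "s \<in> {a, -a}" "SSP_abs T (Suc j) \<pi>'" "i < Suc j"
  shows "\<pi> @ [{s}] \<noteq> \<pi>'[i := insert s' (\<pi>' ! i)]"
proof
  assume eq: "\<pi> @ [{s}] = \<pi>'[i := insert s' (\<pi>' ! i)]"
  have len: "length \<pi> = j" "length \<pi>' = Suc j" using assms(1,3) by (simp_all add: SSP_abs_def)
  obtain x where x: "x \<in> \<pi>' ! j" using SSP_abs_nonempty[OF assms(3), of j] by auto
  then have "x \<in> (\<pi> @ [{s}]) ! j" using eq len by (cases "i = j") (simp_all add: nth_list_update)
  then have "x = s" using len(1) by (auto simp: nth_append)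
  then show False using SSP_abs_abs_mem[OF assms(3) _ x] less assms(2) a_pos by auto
qed

lemma SSP_abs_max_notin:
  assumes ssp: "SSP_abs T k \<pi>" and s: "s \<in> {a, -a}"
  shows "s \<notin> \<Union>(set \<pi>)"
proof
  assume "s \<in> \<Union>(set \<pi>)"
  then obtain l where "l < k" "s \<in> \<pi> ! l" using ssp by (auto simp: SSP_abs_def in_set_conv_nth)
  then have "\<bar>s\<bar> \<in> T" by (rule SSP_abs_abs_mem[OF ssp])
  then show False using less s a_pos by auto
qed

lemma sum_signs_powi_mstat_append:
  fixes q :: "'b::field"
  assumes q: "q \<noteq> 0" and ssp: "SSP_abs T j \<pi>"
  shows "(\<Sum>s\<in>{a, -a}. q powi mstat (\<pi> @ [{s}])) = q powi mstat \<pi> * (q ^ (2 * j + 1) * (1 + q))"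
proof -
  have blocks: "\<forall>B\<in>set \<pi>. finite B" using SSP_abs_finite_block[OF ssp fin] by blast
  have "length \<pi> = j" using ssp by (simp add: SSP_abs_def)
  then have "q powi mstat (\<pi> @ [{s}]) = q powi mstat \<pi> * q ^ (2 * j + (if 0 < s then 1 else 2))"
    if "s \<in> {a, -a}" for s
    using mstat_append_singleton[OF blocks SSP_abs_max_notin[OF ssp that]]
    by (simp only: powi_add_of_nat[OF q])
  then show ?thesis using sum_signs_power[OF a_pos, of q j] a_pos by (simp add: algebra_simps)
qed

lemma sum_signs_powi_mstat_insert_block:
  fixes q :: "'b::field"
  assumes q: "q \<noteq> 0" and ssp: "SSP_abs T k \<pi>" and i: "i < k"
  shows "(\<Sum>s\<in>{a, -a}. q powi mstat (\<pi>[i := insert s (\<pi> ! i)]))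
    = q powi mstat \<pi> * (q ^ (2 * i + 1) * (1 + q))"
proof -
  have blocks: "\<forall>B\<in>set \<pi>. finite B" using SSP_abs_finite_block[OF ssp fin] by blast
  have "i < length \<pi>" using ssp i by (simp add: SSP_abs_def)
  then have "q powi mstat (\<pi>[i := insert s (\<pi> ! i)]) = q powi mstat \<pi> * q ^ (2 * i + (if 0 < s then 1 else 2))"
    if "s \<in> {a, -a}" for s
    using mstat_insert_block[OF _ blocks SSP_abs_max_notin[OF ssp that]]
    by (simp only: powi_add_of_nat[OF q])
  then show ?thesis using sum_signs_power[OF a_pos, of q i] a_pos by (simp add: algebra_simps)
qed

lemma ssp_weight_insert_max:
  assumes q: "q \<noteq> 0"
  shows "ssp_weight q (insert a T) (Suc j) =
    q ^ (2 * j + 1) * (1 + q) * ssp_weight q T j + q * qint q (2 * Suc j) * ssp_weight q T (Suc j)"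
proof -
  let ?w = "\<lambda>\<pi>. q powi mstat \<pi>"
  let ?app = "\<lambda>(\<pi>, s). \<pi> @ [{s}]" and ?ins = "\<lambda>(\<pi>, i, s). \<pi>[i := insert s (\<pi> ! i)]"
  let ?A = "{\<pi>. SSP_abs T j \<pi>} \<times> {a, -a}"
  let ?B = "{\<pi>. SSP_abs T (Suc j) \<pi>} \<times> {..<Suc j} \<times> {a, -a}"
  have "ssp_weight q (insert a T) (Suc j) = sum ?w (?app ` ?A) + sum ?w (?ins ` ?B)"
    unfolding ssp_weight_def SSP_abs_insert_max_eq
    by (rule sum.union_disjoint) (use finite_SSP_abs fin append_singleton_ne_insert_block in auto)
  also have "sum ?w (?app ` ?A) = (\<Sum>\<pi> | SSP_abs T j \<pi>. \<Sum>s\<in>{a, -a}. ?w (\<pi> @ [{s}]))"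
    by (subst sum.reindex) (auto intro: inj_onI simp: sum.cartesian_product split_def)
  also have "\<dots> = (\<Sum>\<pi> | SSP_abs T j \<pi>. ?w \<pi> * (q ^ (2 * j + 1) * (1 + q)))"
    by (intro sum.cong refl) (simp add: sum_signs_powi_mstat_append q)
  also have "sum ?w (?ins ` ?B) =
      (\<Sum>\<pi> | SSP_abs T (Suc j) \<pi>. \<Sum>i<Suc j. \<Sum>s\<in>{a, -a}. ?w (\<pi>[i := insert s (\<pi> ! i)]))"
    by (subst sum.reindex[OF inj_on_insert_block]) (simp add: sum.cartesian_product split_def)
  also have "\<dots> = (\<Sum>\<pi> | SSP_abs T (Suc j) \<pi>. \<Sum>i<Suc j. ?w \<pi> * (q ^ (2 * i + 1) * (1 + q)))"
    by (intro sum.cong refl) (simp add: sum_signs_powi_mstat_insert_block q)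
  also have "\<dots> = (\<Sum>\<pi> | SSP_abs T (Suc j) \<pi>. ?w \<pi> * (q * qint q (2 * Suc j)))"
    by (simp only: q_mult_qint_double sum_distrib_left)
  finally have "ssp_weight q (insert a T) (Suc j) =
      ssp_weight q T j * (q ^ (2 * j + 1) * (1 + q)) + ssp_weight q T (Suc j) * (q * qint q (2 * Suc j))"
    by (simp only: ssp_weight_def sum_distrib_right)
  then show ?thesis by (simp add: algebra_simps)
qed

end

text \<open>q-Stirling numbers of type B without zero block: at q = 1 they are the coefficients of
x^r in the basis x (x - 2) ... (x - 2k + 2).\<close>

fun qstirling_B :: "complex \<Rightarrow> nat \<Rightarrow> nat \<Rightarrow> complex" where
  "qstirling_B q 0 k = (if k = 0 then 1 else 0)"
| "qstirling_B q (Suc r) 0 = 0"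
| "qstirling_B q (Suc r) (Suc k) =
     qstirling_B q r k + q * qint q (2 * Suc k) * qstirling_B q r (Suc k)"

lemma qstirling_B_eq_0: "r < k \<Longrightarrow> qstirling_B q r k = 0"
proof (induction r arbitrary: k)
  case (Suc r)
  then show ?case by (cases k) auto
qed simp

lemma qstirling_B_diag [simp]: "qstirling_B q r r = 1"
  by (induction r) (simp_all add: qstirling_B_eq_0)

lemma ssp_weight_empty: "ssp_weight q {} k = (if k = 0 then 1 else 0)"
  by (simp add: ssp_weight_def SSP_abs_empty_iff mstat_def pos_def)

lemma ssp_weight_eq_qstirling_B:
  assumes "finite T" "T \<subseteq> {0<..}" "q \<noteq> 0"
  shows "ssp_weight q T k = q ^ (k\<^sup>2) * (1 + q) ^ k * qstirling_B q (card T) k"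
  using assms(1,2)
proof (induction T arbitrary: k rule: finite_linorder_max_induct)
  case empty
  then show ?case by (simp add: ssp_weight_empty)
next
  case (insert a T)
  have card: "card (insert a T) = Suc (card T)" using insert.hyps by auto
  show ?case
  proof (cases k)
    case 0
    then show ?thesis by (simp add: ssp_weight_def SSP_abs_zero_iff card)
  next
    case (Suc j)
    have "(Suc j)\<^sup>2 = j\<^sup>2 + (2 * j + 1)" by (simp add: power2_eq_square)
    then have norm: "q ^ (Suc j)\<^sup>2 * (1 + q) ^ Suc j = q ^ (2 * j + 1) * (1 + q) * (q ^ j\<^sup>2 * (1 + q) ^ j)"
      by (simp add: power_add)
    have IH: "ssp_weight q T i = q ^ i\<^sup>2 * (1 + q) ^ i * qstirling_B q (card T) i" for i
      using insert.IH insert.prems by blast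
    have "0 < a" using insert.prems by auto
    then have "ssp_weight q (insert a T) k =
        q ^ (2 * j + 1) * (1 + q) * ssp_weight q T j + q * qint q (2 * Suc j) * ssp_weight q T (Suc j)"
      using ssp_weight_insert_max[OF insert.hyps(1,2) _ assms(3)] Suc by simp
    also have "\<dots> = q ^ (Suc j)\<^sup>2 * (1 + q) ^ Suc j *
        (qstirling_B q (card T) j + q * qint q (2 * Suc j) * qstirling_B q (card T) (Suc j))"
      unfolding IH norm by (simp add: algebra_simps)
    finally show ?thesis using card Suc by simp
  qed
qed

section \<open>The partial signed partitions counted by S_D\<close>

lemma Dsub_eq_UN_SSP_abs:
  "Dsub n k = (\<Union>T \<in> Pow {1..int n} - (\<lambda>i. {1..int n} - {i}) ` {1..int n}. {\<pi>. SSP_abs T k \<pi>})"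
proof -
  let ?P = "Pow {1..int n}" and ?R = "(\<lambda>i. {1..int n} - {i}) ` {1..int n}"
  have SSP_eq: "{\<pi>. SSP T k \<pi>} = {\<pi>. SSP_abs T k \<pi>}" if "T \<in> ?P" for T
    using SSP_iff_SSP_abs[of T] that by force
  have "Bsub n k = (\<Union>T\<in>?P. {\<pi>. SSP_abs T k \<pi>})"
    unfolding Bsub_def using SSP_eq by blast
  moreover have "(\<Union>i\<in>{1..int n}. Bset ({1..int n} - {i}) k) = (\<Union>T\<in>?R. {\<pi>. SSP_abs T k \<pi>})"
    unfolding Bset_def using SSP_eq by auto
  ultimately have "Dsub n k = (\<Union>T\<in>?P. {\<pi>. SSP_abs T k \<pi>}) - (\<Union>T\<in>?R. {\<pi>. SSP_abs T k \<pi>})"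
    unfolding Dsub_def by simp
  also have "\<dots> = (\<Union>T\<in>?P - ?R. {\<pi>. SSP_abs T k \<pi>})"
  proof (intro equalityI subsetI)
    fix \<pi> assume \<pi>: "\<pi> \<in> (\<Union>T\<in>?P. {\<pi>. SSP_abs T k \<pi>}) - (\<Union>T\<in>?R. {\<pi>. SSP_abs T k \<pi>})"
    then obtain T where "T \<in> ?P" "SSP_abs T k \<pi>" by auto
    moreover have "T \<notin> ?R" using \<pi> calculation(2) by (meson DiffD2 UN_I mem_Collect_eq)
    ultimately show "\<pi> \<in> (\<Union>T\<in>?P - ?R. {\<pi>. SSP_abs T k \<pi>})" by (intro UN_I[of T]) auto
  next
    fix \<pi> assume "\<pi> \<in> (\<Union>T\<in>?P - ?R. {\<pi>. SSP_abs T k \<pi>})"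
    then obtain T where "T \<in> ?P" "T \<notin> ?R" "SSP_abs T k \<pi>" by blast
    moreover have "T' = T" if "SSP_abs T' k \<pi>" for T'
      using SSP_abs_unique[OF that \<open>SSP_abs T k \<pi>\<close>] .
    ultimately show "\<pi> \<in> (\<Union>T\<in>?P. {\<pi>. SSP_abs T k \<pi>}) - (\<Union>T\<in>?R. {\<pi>. SSP_abs T k \<pi>})"
      by blast
  qed
  finally show ?thesis .
qed

lemma sum_Dsub_powi_mstat:
  assumes q: "q \<noteq> 0"
  shows "(\<Sum>\<pi>\<in>Dsub n k. q powi mstat \<pi>) = q ^ k\<^sup>2 * (1 + q) ^ k *
    ((\<Sum>T\<in>Pow {1..int n}. qstirling_B q (card T) k) - of_nat n * qstirling_B q (n - 1) k)"
proof -
  let ?P = "Pow {1..int n}" and ?R = "(\<lambda>i. {1..int n} - {i}) ` {1..int n}"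
  have fin: "finite T" and pos: "T \<subseteq> {0<..}" if "T \<in> ?P" for T
    using that by (auto intro: finite_subset)
  have "\<forall>T\<in>?P - ?R. finite {\<pi>. SSP_abs T k \<pi>}" using finite_SSP_abs fin by blast
  moreover have "\<forall>T\<in>?P - ?R. \<forall>T'\<in>?P - ?R. T \<noteq> T' \<longrightarrow>
      {\<pi>. SSP_abs T k \<pi>} \<inter> {\<pi>. SSP_abs T' k \<pi>} = {}"
    using SSP_abs_unique by blast
  ultimately have "(\<Sum>\<pi>\<in>Dsub n k. q powi mstat \<pi>) = (\<Sum>T\<in>?P - ?R. ssp_weight q T k)"
    unfolding Dsub_eq_UN_SSP_abs ssp_weight_def by (intro sum.UNION_disjoint) auto
  also have "\<dots> = q ^ k\<^sup>2 * (1 + q) ^ k * (\<Sum>T\<in>?P - ?R. qstirling_B q (card T) k)"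
    using ssp_weight_eq_qstirling_B[OF fin pos q] by (simp add: sum_distrib_left)
  also have "(\<Sum>T\<in>?P - ?R. qstirling_B q (card T) k) =
      (\<Sum>T\<in>?P. qstirling_B q (card T) k) - (\<Sum>T\<in>?R. qstirling_B q (card T) k)"
    by (rule sum_diff) auto
  also have "(\<Sum>T\<in>?R. qstirling_B q (card T) k) = (\<Sum>i\<in>{1..int n}. qstirling_B q (n - 1) k)"
    by (subst sum.reindex) (auto intro!: inj_onI sum.cong)
  finally show ?thesis by simp
qed

lemma SD_eq_sum_Pow_qstirling_B:
  assumes "q \<noteq> 0" "qint q 2 \<noteq> 0"
  shows "SD q n k = (\<Sum>T\<in>Pow {1..int n}. qstirling_B q (card T) k) - of_nat n * qstirling_B q (n - 1) k"
proof -
  have "qint q 2 = 1 + q" by (simp add: qint_def numeral_2_eq_2)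
  then show ?thesis using assms unfolding SD_def sum_Dsub_powi_mstat[OF assms(1)] by simp
qed

section \<open>Falling factorials of type B\<close>

definition qfallB :: "complex \<Rightarrow> complex \<Rightarrow> nat \<Rightarrow> complex" where
  "qfallB q t k = (\<Prod>i=1..k. t - qint q (2 * i - 1))"

lemma qfallB_0 [simp]: "qfallB q t 0 = 1"
  by (simp add: qfallB_def)

lemma qfallB_Suc: "qfallB q t (Suc k) = qfallB q t k * (t - qint q (2 * k + 1))"
  by (simp add: qfallB_def)

lemma qfallD_eq_qfallB: "k < n \<Longrightarrow> qfallD n q t k = qfallB q t k"
  by (simp add: qfallD_def qfallB_def)

lemma qfallD_top: "qfallD (Suc m) q t (Suc m) = qfallB q t m * (t - qint q m)"
  by (simp add: qfallD_def qfallB_def)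

lemma qstirling_B_qfallB_expansion: "(\<Sum>k\<le>r. qstirling_B q r k * qfallB q t k) = (t - 1) ^ r"
proof (induction r)
  case (Suc r)
  let ?S = "qstirling_B q r" and ?f = "qfallB q t"
  have step: "?S k * ?f (Suc k) + q * qint q (2 * k) * ?S k * ?f k = (t - 1) * (?S k * ?f k)" for k
    using qint_Suc_eq[of q "2 * k"] by (simp add: qfallB_Suc algebra_simps)
  have "(\<Sum>k\<le>Suc r. qstirling_B q (Suc r) k * ?f k) =
      (\<Sum>k\<le>r. ?S k * ?f (Suc k)) + (\<Sum>k\<le>r. q * qint q (2 * Suc k) * ?S (Suc k) * ?f (Suc k))"
    by (simp add: sum.atMost_Suc_shift sum.distrib algebra_simps del: sum.atMost_Suc)
  also have "(\<Sum>k\<le>r. q * qint q (2 * Suc k) * ?S (Suc k) * ?f (Suc k)) =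
      (\<Sum>k\<le>r. q * qint q (2 * k) * ?S k * ?f k)"
    using sum.atMost_Suc_shift[of "\<lambda>k. q * qint q (2 * k) * ?S k * ?f k" r]
    by (simp add: qstirling_B_eq_0 qint_def)
  also have "(\<Sum>k\<le>r. ?S k * ?f (Suc k)) + \<dots> = (t - 1) * (\<Sum>k\<le>r. ?S k * ?f k)"
    by (simp add: step sum.distrib[symmetric] sum_distrib_left)
  finally show ?case using Suc.IH by simp
qed simp

lemma qstirling_B_qfallB_expansion_le:
  "r \<le> N \<Longrightarrow> (\<Sum>k\<le>N. qstirling_B q r k * qfallB q t k) = (t - 1) ^ r"
proof (induction N rule: dec_induct)
  case base
  then show ?case by (rule qstirling_B_qfallB_expansion)
next
  case (step N)
  then show ?case by (simp add: qstirling_B_eq_0)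
qed

lemma sum_Pow_power_card:
  fixes x :: "'b::comm_semiring_1"
  shows "finite A \<Longrightarrow> (\<Sum>T\<in>Pow A. x ^ card T) = (x + 1) ^ card A"
  using prod_add[of A "\<lambda>_. x" "\<lambda>_. 1"] by simp

lemma sum_Pow_qstirling_B_expansion:
  assumes "finite A"
  shows "(\<Sum>k\<le>card A. (\<Sum>T\<in>Pow A. qstirling_B q (card T) k) * qfallB q t k) = t ^ card A"
proof -
  have "(\<Sum>k\<le>card A. (\<Sum>T\<in>Pow A. qstirling_B q (card T) k) * qfallB q t k)
      = (\<Sum>T\<in>Pow A. \<Sum>k\<le>card A. qstirling_B q (card T) k * qfallB q t k)"
    unfolding sum_distrib_right by (rule sum.swap)
  also have "\<dots> = (\<Sum>T\<in>Pow A. (t - 1) ^ card T)"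
    using assms by (intro sum.cong refl qstirling_B_qfallB_expansion_le) (auto intro: card_mono)
  also have "\<dots> = t ^ card A" using sum_Pow_power_card[OF assms, of "t - 1"] by simp
  finally show ?thesis .
qed

lemma sum_Pow_qstirling_B_card:
  assumes "finite A"
  shows "(\<Sum>T\<in>Pow A. qstirling_B q (card T) (card A)) = 1"
proof -
  have "(\<Sum>T\<in>Pow A. qstirling_B q (card T) (card A)) = (\<Sum>T\<in>{A}. qstirling_B q (card T) (card A))"
  proof (rule sum.mono_neutral_right)
    show "\<forall>T\<in>Pow A - {A}. qstirling_B q (card T) (card A) = 0"
      using assms by (auto intro!: qstirling_B_eq_0 psubset_card_mono)
  qed (use assms in auto)
  then show ?thesis by simp
qed

lemma sum_qfallD_Suc:
  "(\<Sum>k\<le>Suc m. c k * qfallD (Suc m) q t k) =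
     (\<Sum>k\<le>m. c k * qfallB q t k) + c (Suc m) * qfallB q t m * (t - qint q m)"
  by (simp add: qfallD_eq_qfallB qfallD_top)

lemma qstirling_B_qfallD_expansion:
  "(\<Sum>k\<le>Suc m. qstirling_B q m k * qfallD (Suc m) q t k) = (t - 1) ^ m"
  using sum_qfallD_Suc[of "qstirling_B q m" m] qstirling_B_qfallB_expansion[of q m t]
  by (simp add: qstirling_B_eq_0)

lemma sum_Pow_qstirling_B_qfallD_expansion:
  assumes "finite A" "card A = Suc m"
  shows "(\<Sum>k\<le>Suc m. (\<Sum>T\<in>Pow A. qstirling_B q (card T) k) * qfallD (Suc m) q t k)
    = t ^ Suc m - qfallB q t (Suc m) + qfallB q t m * (t - qint q m)"
proof -
  have "(\<Sum>k\<le>m. (\<Sum>T\<in>Pow A. qstirling_B q (card T) k) * qfallB q t k) + qfallB q t (Suc m)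
      = t ^ Suc m"
    using sum_Pow_qstirling_B_expansion[OF assms(1), of q t] sum_Pow_qstirling_B_card[OF assms(1), of q]
    unfolding assms(2) by simp
  then show ?thesis
    using sum_Pow_qstirling_B_card[OF assms(1), of q] unfolding sum_qfallD_Suc assms(2)
    by (simp add: algebra_simps)
qed

theorem proposition3p4:
  fixes n :: nat and t q :: complex
  assumes "q \<noteq> 0" and "qint q 2 \<noteq> 0"
  shows "t ^ n = (\<Sum>k=0..n. SD q n k * qfallD n q t k)
                 + of_nat n * (t - 1) ^ (n - 1)
                 - qint q n * q ^ (n - 1) * qfallD n q t (n - 1)"
proof (cases n)
  case 0
  then show ?thesis using SD_eq_sum_Pow_qstirling_B[OF assms] by (simp add: qfallD_def qint_def)
next
  case (Suc m)
  define S where "S k = (\<Sum>T\<in>Pow {1..int n}. qstirling_B q (card T) k)" for k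
  have SD: "SD q n k = S k - of_nat n * qstirling_B q m k" for k
    using SD_eq_sum_Pow_qstirling_B[OF assms] Suc unfolding S_def by simp
  have "(\<Sum>k\<le>n. SD q n k * qfallD n q t k) =
      (\<Sum>k\<le>n. S k * qfallD n q t k) - of_nat n * (\<Sum>k\<le>n. qstirling_B q m k * qfallD n q t k)"
    unfolding SD left_diff_distrib sum_subtractf sum_distrib_left by (simp add: mult.assoc)
  also have "(\<Sum>k\<le>n. S k * qfallD n q t k) = t ^ n - qfallB q t n + qfallB q t m * (t - qint q m)"
    using sum_Pow_qstirling_B_qfallD_expansion[of "{1..int n}" m q t] Suc unfolding S_def by simp
  also have "(\<Sum>k\<le>n. qstirling_B q m k * qfallD n q t k) = (t - 1) ^ m"
    using qstirling_B_qfallD_expansion Suc by simp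
  also have "qfallB q t n = qfallB q t m * (t - qint q m - q ^ m * qint q n)"
    using Suc qint_add[of q m "Suc m"] by (simp add: qfallB_Suc mult_2)
  finally show ?thesis using Suc by (simp add: atLeast0AtMost qfallD_eq_qfallB algebra_simps)
qed

end
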